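(* For every $y\in\mathbf H^1_{\mathbb C}$, $$\lim_{b\to\infty}\mathrm{Cart}\big(g(1,b)y,\,g(1,-b)y,\,y\big)=-\frac{\pi}{2}.$$
   Context: $\mathbf H^1_{\mathbb C}$ is the set of lines $[v]$ in $\mathbb C^2$ with $B(v,v)>0$, where $B(z,w)=z_1\bar w_1-z_2\bar w_2$. Let $\xi_1=(e_1+e_2)/\sqrt2$, $\xi_2=(e_1-e_2)/\sqrt2$, and for $b\in\mathbb R$ let $g(1,b)\in SU(1,1)$ have matrix $\begin{pmatrix}1&ib\\0&1\end{pmatrix}$ in the basis $(\xi_1,\xi_2)$, acting on $\mathbf H^1_{\mathbb C}$. The Cartan argument is $\mathrm{Cart}(x,y,z)=\arg\big(B(\tilde x,\tilde y)B(\tilde y,\tilde z)B(\tilde z,\tilde x)\big)\in(-\pi/2,\pi/2)$ for any lifts $\tilde x,\tilde y,\tilde z$. *)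

theory Defs
  imports "HOL-Analysis.Analysis"
begin

definition hform :: "complex \<times> complex \<Rightarrow> complex \<times> complex \<Rightarrow> complex" where
  "hform z w = fst z * cnj (fst w) - snd z * cnj (snd w)"

text \<open>Points of complex hyperbolic line: represented by their lifts v with B(v,v) > 0.\<close>
definition in_H1 :: "complex \<times> complex \<Rightarrow> bool" where
  "in_H1 v \<longleftrightarrow> Re (hform v v) > 0"

definition xi1 :: "complex \<times> complex" where
  "xi1 = (complex_of_real (1 / sqrt 2), complex_of_real (1 / sqrt 2))"

definition xi2 :: "complex \<times> complex" where
  "xi2 = (complex_of_real (1 / sqrt 2), - complex_of_real (1 / sqrt 2))"

text \<open>Coordinates of v in the basis (xi1, xi2): v = coord1 v * xi1 + coord2 v * xi2.\<close>
definition coord1 :: "complex \<times> complex \<Rightarrow> complex" where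
  "coord1 v = (fst v + snd v) / complex_of_real (sqrt 2)"

definition coord2 :: "complex \<times> complex \<Rightarrow> complex" where
  "coord2 v = (fst v - snd v) / complex_of_real (sqrt 2)"

definition lincomb :: "complex \<Rightarrow> complex \<times> complex \<Rightarrow> complex \<Rightarrow> complex \<times> complex \<Rightarrow> complex \<times> complex" where
  "lincomb a u c w = (a * fst u + c * fst w, a * snd u + c * snd w)"

text \<open>g(1,b): matrix ((1, i b), (0, 1)) in the basis (xi1, xi2).\<close>
definition g_act :: "real \<Rightarrow> complex \<times> complex \<Rightarrow> complex \<times> complex" where
  "g_act b v = lincomb (coord1 v + \<i> * complex_of_real b * coord2 v) xi1 (coord2 v) xi2"

text \<open>Cartan argument, computed on lifts; Arg takes values in (-pi, pi], which agrees with
  the paper's range (-pi/2, pi/2) on triples of points of the hyperbolic line.\<close>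
definition Cart :: "complex \<times> complex \<Rightarrow> complex \<times> complex \<Rightarrow> complex \<times> complex \<Rightarrow> real" where
  "Cart x y z = Arg (hform x y * hform y z * hform z x)"

end

theory Submission
  imports Defs "HOL-Real_Asymp.Real_Asymp"
begin

(* In the coordinates (p, q) of the basis (xi1, xi2) the form reads
  B(v, w) = p_v cnj q_w + q_v cnj p_w, and g(1,b) is p |-> p + i b q, so that
  B(g(1,a) v, g(1,b) w) = B(v, w) + i (a - b) q_v cnj q_w.  For y with r = B(y,y) > 0
  and c = |q_y|^2 > 0 the Cartan triple product is therefore
  (r + 2 i b c)(r - i b c)^2 = r (r^2 + 3 (bc)^2) - 2 i (bc)^3.
  Its real part stays positive while the ratio of imaginary to real part tends to -infinity,
  so its argument tends to -pi/2. *)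

lemma sqrt2_complex:
  "complex_of_real (sqrt 2) * complex_of_real (sqrt 2) = 2"
  "complex_of_real (1 / sqrt 2) = 1 / complex_of_real (sqrt 2)"
  "cnj (complex_of_real (sqrt 2)) = complex_of_real (sqrt 2)"
  by (simp_all flip: of_real_mult)

lemma coord_lincomb_xi:
  "coord1 (lincomb a xi1 c xi2) = a"
  "coord2 (lincomb a xi1 c xi2) = c"
proof -
  obtain t where t: "complex_of_real (sqrt 2) = t" "t * t = 2"
    by (simp add: sqrt2_complex)
  then have "t \<noteq> 0" by auto
  with t show "coord1 (lincomb a xi1 c xi2) = a" "coord2 (lincomb a xi1 c xi2) = c"
    by (simp_all add: coord1_def coord2_def lincomb_def xi1_def xi2_def sqrt2_complex field_simps)
qed

lemma lincomb_coord_xi: "lincomb (coord1 v) xi1 (coord2 v) xi2 = v"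
proof -
  obtain t where t: "complex_of_real (sqrt 2) = t" "t * t = 2"
    by (simp add: sqrt2_complex)
  then have "t \<noteq> 0" by auto
  with t show ?thesis
    by (cases v) (simp add: coord1_def coord2_def lincomb_def xi1_def xi2_def sqrt2_complex field_simps)
qed

lemma hform_coord: "hform v w = coord1 v * cnj (coord2 w) + coord2 v * cnj (coord1 w)"
proof -
  obtain t where t: "complex_of_real (sqrt 2) = t" "t * t = 2" "cnj t = t"
    by (simp add: sqrt2_complex)
  then have "t \<noteq> 0" by auto
  with t show ?thesis
    by (cases v; cases w) (simp add: hform_def coord1_def coord2_def field_simps)
qed

lemma coord1_g_act [simp]: "coord1 (g_act b v) = coord1 v + \<i> * of_real b * coord2 v"
  and coord2_g_act [simp]: "coord2 (g_act b v) = coord2 v"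
  by (simp_all add: g_act_def coord_lincomb_xi)

lemma g_act_zero: "g_act 0 v = v"
  by (simp add: g_act_def lincomb_coord_xi)

lemma hform_g_act:
  "hform (g_act a v) (g_act b w) = hform v w + \<i> * of_real (a - b) * coord2 v * cnj (coord2 w)"
  by (simp add: hform_coord algebra_simps)

lemma hform_self_real: "hform v v = of_real (Re (hform v v))"
  by (simp add: hform_def complex_eq_iff)

lemma coord2_nonzero_if_in_H1: "in_H1 v \<Longrightarrow> coord2 v \<noteq> 0"
  by (auto simp: in_H1_def hform_coord)

lemma cubic_product:
  "(of_real r + \<i> * of_real (2 * s)) * (of_real r - \<i> * of_real s) ^ 2
     = Complex (r * (r\<^sup>2 + 3 * s\<^sup>2)) (- 2 * s ^ 3)"
  by (simp add: complex_eq_iff power2_eq_square power3_eq_cube algebra_simps)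

lemma Cart_g_act_orbit:
  assumes "in_H1 y"
  defines "r \<equiv> Re (hform y y)" and "c \<equiv> (cmod (coord2 y))\<^sup>2"
  shows "Cart (g_act b y) (g_act (- b) y) y = arctan (- 2 * (b * c) ^ 3 / (r * (r\<^sup>2 + 3 * (b * c)\<^sup>2)))"
proof -
  have r_pos: "r > 0"
    using assms(1) by (simp add: in_H1_def r_def)
  have self: "hform y y = of_real r"
    unfolding r_def by (rule hform_self_real)
  have q: "coord2 y * cnj (coord2 y) = of_real c"
    unfolding c_def by (simp add: complex_norm_square[symmetric])
  have "hform (g_act b y) (g_act (- b) y) = of_real r + \<i> * of_real (2 * (b * c))"
    using hform_g_act[of b y "- b" y] by (simp add: self mult.assoc q)
  moreover have "hform (g_act (- b) y) y = of_real r - \<i> * of_real (b * c)"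
    using hform_g_act[of "- b" y 0 y] by (simp add: g_act_zero self mult.assoc q)
  moreover have "hform y (g_act b y) = of_real r - \<i> * of_real (b * c)"
    using hform_g_act[of 0 y b y] by (simp add: g_act_zero self mult.assoc q)
  ultimately have "hform (g_act b y) (g_act (- b) y) * hform (g_act (- b) y) y * hform y (g_act b y)
      = (of_real r + \<i> * of_real (2 * (b * c))) * (of_real r - \<i> * of_real (b * c)) ^ 2"
    by (simp only: mult.assoc power2_eq_square)
  also have "\<dots> = Complex (r * (r\<^sup>2 + 3 * (b * c)\<^sup>2)) (- 2 * (b * c) ^ 3)"
    by (rule cubic_product)
  finally have product: "hform (g_act b y) (g_act (- b) y) * hform (g_act (- b) y) y * hform y (g_act b y)
      = Complex (r * (r\<^sup>2 + 3 * (b * c)\<^sup>2)) (- 2 * (b * c) ^ 3)" .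
  have "r * (r\<^sup>2 + 3 * (b * c)\<^sup>2) > 0"
    using r_pos by (simp add: add_pos_nonneg)
  then show ?thesis
    by (simp add: Cart_def product arg_conv_arctan)
qed

theorem mainTheorem16:
  fixes y :: "complex \<times> complex"
  assumes "in_H1 y"
  shows "((\<lambda>b::real. Cart (g_act b y) (g_act (- b) y) y) \<longlongrightarrow> - pi / 2) at_top"
proof -
  define r where "r = Re (hform y y)"
  define c where "c = (cmod (coord2 y))\<^sup>2"
  have "r > 0"
    using assms by (simp add: in_H1_def r_def)
  moreover have "c > 0"
    using coord2_nonzero_if_in_H1[OF assms] by (simp add: c_def)
  ultimately have "((\<lambda>b. arctan (- 2 * (b * c) ^ 3 / (r * (r\<^sup>2 + 3 * (b * c)\<^sup>2)))) \<longlongrightarrow> - pi / 2) at_top"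
    by real_asymp
  then show ?thesis
    by (simp add: Cart_g_act_orbit[OF assms] r_def c_def)
qed

end
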